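(* Let $R$ be a uniform $L$-layered $1$-semifield$^\dagger$. Any polynomials $f,g,h\in R[\lambda]$ satisfy $$|\Re(f,gh)|\cong_\nu|\Re(f,g)|\,|\Re(f,h)|\quad\text{and}\quad |\Re(fg,h)|\cong_\nu|\Re(f,h)|\,|\Re(g,h)|.$$
   Context: Concretely, $R=R(L,\mathcal{G})$ with $L$ a totally ordered commutative semiring$^\dagger$ (semiring without necessarily a zero) and $\mathcal{G}$ a totally ordered abelian group; elements $x^{[\ell]}$ ($x\in\mathcal{G}$, layer $\ell$), $x^{[k]}y^{[\ell]}=(xy)^{[k\ell]}$, $x^{[k]}+y^{[\ell]}$ equal to $x^{[k]}$ if $x>y$, $y^{[\ell]}$ if $x<y$, $x^{[k+\ell]}$ if $x=y$; a zero element $\mathbb{0}_R$ is formally adjoined. $u\cong_\nu v$ means $u,v$ have the same $\mathcal{G}$-value. The layered permanent of an $N\times N$ matrix is $|A|=\sum_{\sigma\in S_N}\prod_i a_{i,\sigma(i)}$. For $f=\sum_{i=0}^m\alpha_i\lambda^i$, $A_n(f)$ is the $n\times(m+n)$ matrix whose $r$-th row is $(\mathbb{0},\dots,\mathbb{0},\alpha_0,\dots,\alpha_m,\mathbb{0},\dots)$ with $r-1$ leading zeros; the Sylvester matrix is $\Re(f,g)=\binom{A_n(f)}{A_m(g)}$ ($\deg f=m,\deg g=n\ge1$), and the layered resultant is $|\Re(f,g)|$; for constant $f=\alpha_0$ the resultant is $\alpha_0^n$, and symmetrically for constant $g$. *)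

theory Defs
  imports "HOL-Computational_Algebra.Polynomial" "HOL-Combinatorics.Permutations"
begin

text \<open>Layer semiring L: a totally ordered commutative semiring with 1 that need
not have a zero.\<close>

class lin_ord_comm_semiring_1 = comm_semiring + comm_monoid_mult + linorder +
  assumes add_right_mono_L: "a \<le> b \<Longrightarrow> a + c \<le> b + c"
  and mult_right_mono_L: "a \<le> b \<Longrightarrow> a * c \<le> b * c"

text \<open>The uniform layered structure R(L,G) with a formally adjoined zero.
  Lay x l stands for x^[l]. The totally ordered abelian group G is written
  additively (class linordered_ab_group_add), so the product x y of G is x + y
  and the unit of G is 0.\<close>

datatype ('g, 'l) layered = LZero | Lay 'g 'l

fun lay_add :: "('g::linorder, 'l::plus) layered \<Rightarrow> ('g, 'l) layered \<Rightarrow> ('g, 'l) layered" where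
  "lay_add LZero b = b"
| "lay_add (Lay x k) LZero = Lay x k"
| "lay_add (Lay x k) (Lay y l) =
     (if y < x then Lay x k else if x < y then Lay y l else Lay x (k + l))"

fun lay_mult :: "('g::plus, 'l::times) layered \<Rightarrow> ('g, 'l) layered \<Rightarrow> ('g, 'l) layered" where
  "lay_mult LZero b = LZero"
| "lay_mult (Lay x k) LZero = LZero"
| "lay_mult (Lay x k) (Lay y l) = Lay (x + y) (k * l)"

instantiation layered :: (linordered_ab_group_add, lin_ord_comm_semiring_1) comm_semiring_1
begin

definition zero_layered_def: "0 = LZero"
definition one_layered_def: "1 = Lay 0 1"
definition plus_layered_def: "a + b = lay_add a b"
definition times_layered_def: "a * b = lay_mult a b"

instance
proof
  fix a b c :: "('a, 'b) layered"
  show "a + b + c = a + (b + c)"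
    unfolding plus_layered_def
    by (cases a; cases b; cases c) (auto simp: add.assoc)
  show "a + b = b + a"
    unfolding plus_layered_def
    by (cases a; cases b) (auto simp: add.commute)
  show "0 + a = a"
    unfolding plus_layered_def zero_layered_def by simp
  show "a * b * c = a * (b * c)"
    unfolding times_layered_def
    by (cases a; cases b; cases c) (auto simp: add.assoc mult.assoc)
  show "a * b = b * a"
    unfolding times_layered_def
    by (cases a; cases b) (auto simp: add.commute mult.commute)
  show "1 * a = a"
    unfolding times_layered_def one_layered_def by (cases a) auto
  show "0 * a = 0"
    unfolding times_layered_def zero_layered_def by simp
  show "a * 0 = 0"
    unfolding times_layered_def zero_layered_def by (cases a) auto
  show "(a + b) * c = a * c + b * c"
    unfolding times_layered_def plus_layered_def
    by (cases a; cases b; cases c) (auto simp: distrib_right)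
  show "(0::('a, 'b) layered) \<noteq> 1"
    unfolding zero_layered_def one_layered_def by simp
qed

end

fun nu_val :: "('g, 'l) layered \<Rightarrow> 'g option" where
  "nu_val LZero = None"
| "nu_val (Lay x l) = Some x"

definition nu_equiv :: "('g, 'l) layered \<Rightarrow> ('g, 'l) layered \<Rightarrow> bool" (infix "\<cong>\<^sub>\<nu>" 50) where
  "u \<cong>\<^sub>\<nu> v \<longleftrightarrow> nu_val u = nu_val v"

definition permanent :: "nat \<Rightarrow> (nat \<Rightarrow> nat \<Rightarrow> 'a::comm_semiring_1) \<Rightarrow> 'a" where
  "permanent N A = (\<Sum>\<sigma> \<in> {\<sigma>. \<sigma> permutes {..<N}}. \<Prod>i<N. A i (\<sigma> i))"

definition sylvester :: "'a::comm_semiring_1 poly \<Rightarrow> 'a poly \<Rightarrow> nat \<Rightarrow> nat \<Rightarrow> 'a" where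
  "sylvester f g r j =
     (if r < degree g then (if r \<le> j then coeff f (j - r) else 0)
      else (let r' = r - degree g in if r' \<le> j then coeff g (j - r') else 0))"

definition layered_resultant :: "'a::comm_semiring_1 poly \<Rightarrow> 'a poly \<Rightarrow> 'a" where
  "layered_resultant f g =
     (if degree f = 0 then coeff f 0 ^ degree g
      else if degree g = 0 then coeff g 0 ^ degree f
      else permanent (degree f + degree g) (sylvester f g))"

end

theory Submission
  imports Defs
begin

text \<open>Forgetting the layers maps \<open>R\<close> homomorphically onto the max-plus semifield over the value group; the
  map commutes with resultants and turns \<open>\<cong>\<^sub>\<nu>\<close> into equality, so it suffices to show that
  tropical resultants are multiplicative, and by symmetry of the resultant only in the second
  argument. This follows from the tropical Poisson formula
  \<open>Res(f, g) = lc(f) ^ deg g * g(\<alpha>\<^sub>1) * \<dots> * g(\<alpha>\<^sub>m)\<close>, where \<open>\<alpha>\<^sub>1 \<ge> \<dots> \<ge> \<alpha>\<^sub>m\<close> are the tropical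
  roots of \<open>f\<close>. The permanent of the Sylvester matrix is the maximum of its terms; every term is
  bounded by the right-hand side, because the exponents that a term gives to the roots are
  majorized by those of the \<open>g\<close>-rows, and a suitable shuffle of the \<open>f\<close>- and \<open>g\<close>-rows attains
  it. Tropical roots exist once all coefficient ratios have roots of orders up to \<open>deg f\<close>, which is
  arranged by first applying the injective endomorphism \<open>a \<mapsto> a ^ (deg f)!\<close>.\<close>

section \<open>The tropical semifield\<close>

instance layered :: (linordered_ab_group_add, lin_ord_comm_semiring_1) semiring_1_no_zero_divisors
proof
  fix a b :: "('a, 'b) layered"
  assume "a \<noteq> 0" "b \<noteq> 0"
  then show "a * b \<noteq> 0"
    unfolding zero_layered_def times_layered_def by (cases a; cases b) auto
qed

instantiation layered :: (linorder, linorder) linorder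
begin

definition less_eq_layered_def:
  "a \<le> b \<longleftrightarrow> (case (a, b) of
      (LZero, _) \<Rightarrow> True
    | (Lay _ _, LZero) \<Rightarrow> False
    | (Lay x k, Lay y l) \<Rightarrow> x < y \<or> x = y \<and> k \<le> l)"

definition less_layered_def: "(a::('a, 'b) layered) < b \<longleftrightarrow> a \<le> b \<and> \<not> b \<le> a"

instance
proof
  fix a b c :: "('a, 'b) layered"
  show "a < b \<longleftrightarrow> a \<le> b \<and> \<not> b \<le> a" by (simp add: less_layered_def)
  show "a \<le> a" unfolding less_eq_layered_def by (cases a) auto
  show "a \<le> b \<Longrightarrow> b \<le> c \<Longrightarrow> a \<le> c" unfolding less_eq_layered_def
    by (cases a; cases b; cases c) auto
  show "a \<le> b \<Longrightarrow> b \<le> a \<Longrightarrow> a = b" unfolding less_eq_layered_def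
    by (cases a; cases b) auto
  show "a \<le> b \<or> b \<le> a" unfolding less_eq_layered_def
    by (cases a; cases b) auto
qed

end

instantiation unit :: lin_ord_comm_semiring_1
begin

definition plus_unit_def: "(_::unit) + _ = ()"
definition times_unit_def: "(_::unit) * _ = ()"
definition one_unit_def: "(1::unit) = ()"

instance by standard auto

end

text \<open>With the one-element layer semiring \<open>unit\<close>, the layered structure is the max-plus
  semifield over \<open>'g\<close>.\<close>

type_synonym 'g trop = "('g, unit) layered"

lemma trop_add_eq_max: "(a::'g::linordered_ab_group_add trop) + b = max a b"
  unfolding plus_layered_def max_def less_eq_layered_def by (cases a; cases b) auto

lemma trop_zero_le [simp]: "(0::'g::linordered_ab_group_add trop) \<le> a"
  unfolding zero_layered_def less_eq_layered_def by simp

lemma trop_le_zero_iff [simp]: "(a::'g::linordered_ab_group_add trop) \<le> 0 \<longleftrightarrow> a = 0"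
  unfolding zero_layered_def less_eq_layered_def by (cases a) auto

lemma trop_mult_right_mono: "(a::'g::linordered_ab_group_add trop) \<le> b \<Longrightarrow> a * c \<le> b * c"
  unfolding times_layered_def less_eq_layered_def by (cases a; cases b; cases c) auto

lemma trop_mult_left_mono: "(a::'g::linordered_ab_group_add trop) \<le> b \<Longrightarrow> c * a \<le> c * b"
  using trop_mult_right_mono[of a b c] by (simp add: mult.commute)

lemma trop_mult_mono: "(a::'g::linordered_ab_group_add trop) \<le> b \<Longrightarrow> c \<le> d \<Longrightarrow> a * c \<le> b * d"
  by (meson order_trans trop_mult_left_mono trop_mult_right_mono)

lemma trop_mult_strict_mono:
  "(a::'g::linordered_ab_group_add trop) < b \<Longrightarrow> c \<le> d \<Longrightarrow> d \<noteq> 0 \<Longrightarrow> a * c < b * d"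
  unfolding times_layered_def less_layered_def less_eq_layered_def zero_layered_def
  by (cases a; cases b; cases c; cases d)
     (auto simp: add_strict_mono add_less_le_mono add_le_less_mono,
      (metis add_strict_mono order_less_asym order_less_irrefl)+)

lemma trop_mult_le_cancel_right:
  "c \<noteq> 0 \<Longrightarrow> (a::'g::linordered_ab_group_add trop) * c \<le> b * c \<Longrightarrow> a \<le> b"
  using trop_mult_strict_mono[of b a c c] by (meson not_le order_refl)

lemma trop_power_mono: "(a::'g::linordered_ab_group_add trop) \<le> b \<Longrightarrow> a ^ k \<le> b ^ k"
  by (induction k) (auto intro: trop_mult_mono)

lemma trop_power_strict_mono:
  assumes "(a::'g::linordered_ab_group_add trop) < b" and "k > 0"
  shows "a ^ k < b ^ k"
  using assms(2)
proof (induction k)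
  case (Suc k)
  have "b \<noteq> 0" using assms(1) trop_zero_le[of a] by (auto simp: less_le_not_le)
  then show ?case
    using Suc trop_mult_strict_mono[OF assms(1), of "a ^ k" "b ^ k"]
    by (cases "k = 0") (auto simp: less_imp_le)
qed simp

lemma trop_power_le_imp_le: "k > 0 \<Longrightarrow> (a::'g::linordered_ab_group_add trop) ^ k \<le> b ^ k \<Longrightarrow> a \<le> b"
  using trop_power_strict_mono[of b a k] by (meson not_le)

lemma trop_power_inj: "k > 0 \<Longrightarrow> (a::'g::linordered_ab_group_add trop) ^ k = b ^ k \<Longrightarrow> a = b"
  using trop_power_le_imp_le[of k a b] trop_power_le_imp_le[of k b a] by auto

lemma trop_power_add_distrib: "((a::'g::linordered_ab_group_add trop) + b) ^ k = a ^ k + b ^ k"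
  by (simp add: trop_add_eq_max max_def trop_power_mono)
     (metis nle_le order_antisym trop_power_mono)

lemma trop_nonzero_invertible: "(c::'g::linordered_ab_group_add trop) \<noteq> 0 \<Longrightarrow> \<exists>c'. c * c' = 1"
  by (cases c) (auto simp: zero_layered_def times_layered_def one_layered_def one_unit_def
      intro: exI[of _ "Lay (- _) ()"])

lemma trop_member_le_sum:
  "finite A \<Longrightarrow> x \<in> A \<Longrightarrow> (f x :: 'g::linordered_ab_group_add trop) \<le> sum f A"
  by (induction A rule: finite_induct) (auto simp: trop_add_eq_max le_max_iff_disj)

lemma trop_sum_le:
  "(\<And>x. x \<in> A \<Longrightarrow> (f x :: 'g::linordered_ab_group_add trop) \<le> c) \<Longrightarrow> sum f A \<le> c"
  by (induction A rule: infinite_finite_induct) (auto simp: trop_add_eq_max)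

lemma trop_sum_attained:
  "finite A \<Longrightarrow> A \<noteq> {} \<Longrightarrow> \<exists>x\<in>A. sum f A = (f x :: 'g::linordered_ab_group_add trop)"
proof (induction A rule: finite_induct)
  case (insert y A)
  then show ?case by (cases "A = {}") (auto simp: trop_add_eq_max max_def)
qed simp

lemma trop_prod_mono:
  "(\<And>i. i \<in> A \<Longrightarrow> (f i :: 'g::linordered_ab_group_add trop) \<le> g i) \<Longrightarrow> prod f A \<le> prod g A"
  by (induction A rule: infinite_finite_induct) (auto intro: trop_mult_mono)

lemma trop_coeff_le_poly: "coeff p k * x ^ k \<le> poly (p::'g::linordered_ab_group_add trop poly) x"
proof (cases "k \<le> degree p")
  case True
  then show ?thesis unfolding poly_altdef by (intro trop_member_le_sum) auto
qed (simp add: coeff_eq_0)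

section \<open>Transfer along homomorphisms\<close>

locale zero_reflecting_hom =
  fixes h :: "'a::comm_semiring_1 \<Rightarrow> 'b::comm_semiring_1"
  assumes hom_0: "h 0 = 0" and hom_1: "h 1 = 1"
    and hom_add: "h (a + b) = h a + h b" and hom_mult: "h (a * b) = h a * h b"
    and hom_eq_0_imp: "h a = 0 \<Longrightarrow> a = 0"
begin

lemma hom_sum: "h (sum f A) = (\<Sum>x\<in>A. h (f x))"
  by (induction A rule: infinite_finite_induct) (auto simp: hom_0 hom_add)

lemma hom_prod: "h (prod f A) = (\<Prod>x\<in>A. h (f x))"
  by (induction A rule: infinite_finite_induct) (auto simp: hom_1 hom_mult)

lemma hom_power: "h (a ^ k) = h a ^ k"
  by (induction k) (auto simp: hom_1 hom_mult)

lemma coeff_map_poly_hom: "coeff (map_poly h p) i = h (coeff p i)"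
  by (simp add: coeff_map_poly hom_0)

lemma degree_map_poly_hom: "degree (map_poly h p) = degree p"
  by (rule degree_map_poly) (use hom_eq_0_imp in auto)

lemma map_poly_hom_mult: "map_poly h (p * q) = map_poly h p * map_poly h q"
  by (rule poly_eqI) (simp add: coeff_map_poly_hom coeff_mult hom_sum hom_mult)

lemma map_poly_hom_eq_0_iff: "map_poly h p = 0 \<longleftrightarrow> p = 0"
  by (metis coeff_map_poly_hom degree_map_poly_hom hom_eq_0_imp leading_coeff_0_iff map_poly_0)

lemma permanent_hom: "h (permanent N A) = permanent N (\<lambda>i j. h (A i j))"
  by (simp add: permanent_def hom_sum hom_prod)

lemma layered_resultant_hom:
  "layered_resultant (map_poly h f) (map_poly h g) = h (layered_resultant f g)"
proof -
  have "sylvester (map_poly h f) (map_poly h g) = (\<lambda>i j. h (sylvester f g i j))"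
    by (simp add: fun_eq_iff sylvester_def degree_map_poly_hom coeff_map_poly_hom hom_0 Let_def)
  then show ?thesis
    by (simp add: layered_resultant_def degree_map_poly_hom coeff_map_poly_hom hom_power permanent_hom)
qed

end

fun tropicalize :: "('g::linordered_ab_group_add, 'l::lin_ord_comm_semiring_1) layered \<Rightarrow> 'g trop" where
  "tropicalize LZero = LZero"
| "tropicalize (Lay x k) = Lay x ()"

lemma zero_reflecting_hom_tropicalize: "zero_reflecting_hom tropicalize"
proof
  fix a b :: "('a::linordered_ab_group_add, 'b::lin_ord_comm_semiring_1) layered"
  show "tropicalize 0 = 0" by (simp add: zero_layered_def)
  show "tropicalize 1 = 1" by (simp add: one_layered_def)
  show "tropicalize (a + b) = tropicalize a + tropicalize b"
    unfolding plus_layered_def by (cases a; cases b) auto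
  show "tropicalize (a * b) = tropicalize a * tropicalize b"
    unfolding times_layered_def by (cases a; cases b) auto
  show "tropicalize a = 0 \<Longrightarrow> a = 0"
    unfolding zero_layered_def by (cases a) auto
qed

lemma nu_equiv_iff_tropicalize_eq: "u \<cong>\<^sub>\<nu> v \<longleftrightarrow> tropicalize u = tropicalize v"
  unfolding nu_equiv_def by (cases u; cases v) auto

lemma zero_reflecting_hom_trop_power:
  "d > 0 \<Longrightarrow> zero_reflecting_hom (\<lambda>a::'g::linordered_ab_group_add trop. a ^ d)"
  by unfold_locales (auto simp: trop_power_add_distrib power_mult_distrib)

lemma permanent_permute_rows:
  assumes \<rho>: "\<rho> permutes {..<N}"
  shows "permanent N (\<lambda>i j. A (\<rho> i) j) = permanent N A"
proof -
  let ?P = "{\<sigma>. \<sigma> permutes {..<N}}"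
  have row_reindex: "(\<Prod>i<N. A (\<rho> i) (\<sigma> i)) = (\<Prod>k<N. A k ((\<sigma> \<circ> inv \<rho>) k))" for \<sigma>
    using prod.reindex_bij_betw[OF permutes_imp_bij[OF \<rho>], of "\<lambda>k. A k (\<sigma> (inv \<rho> k))"]
    by (simp add: permutes_inverses(2)[OF \<rho>])
  have "bij_betw (\<lambda>\<sigma>. \<sigma> \<circ> inv \<rho>) ?P ?P"
  proof (rule bij_betw_byWitness[where f' = "\<lambda>\<tau>. \<tau> \<circ> \<rho>"])
    show "\<forall>\<sigma>\<in>?P. \<sigma> \<circ> inv \<rho> \<circ> \<rho> = \<sigma>" "\<forall>\<sigma>\<in>?P. \<sigma> \<circ> \<rho> \<circ> inv \<rho> = \<sigma>"
      using permutes_inverses[OF \<rho>] by (auto simp: fun_eq_iff)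
    show "(\<lambda>\<sigma>. \<sigma> \<circ> inv \<rho>) ` ?P \<subseteq> ?P" "(\<lambda>\<tau>. \<tau> \<circ> \<rho>) ` ?P \<subseteq> ?P"
      using permutes_compose permutes_inv[OF \<rho>] \<rho> by blast+
  qed
  then show ?thesis
    unfolding permanent_def row_reindex
    using sum.reindex_bij_betw[of "\<lambda>\<sigma>. \<sigma> \<circ> inv \<rho>" ?P ?P "\<lambda>\<tau>. \<Prod>k<N. A k (\<tau> k)"] by simp
qed

lemma layered_resultant_commute: "layered_resultant f g = layered_resultant g f"
proof (cases "degree f = 0 \<or> degree g = 0")
  case False
  define m n where "m = degree f" and "n = degree g"
  define \<rho> where "\<rho> r = (if r < m then r + n else if r < m + n then r - m else r)" for r
  have "bij_betw \<rho> {..<n + m} {..<n + m}"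
    by (rule bij_betw_byWitness[where f' = "\<lambda>r. if r < n then r + m else r - n"])
       (auto simp: \<rho>_def)
  then have \<rho>: "\<rho> permutes {..<n + m}"
    by (rule bij_imp_permutes) (auto simp: \<rho>_def)
  have "permanent (n + m) (sylvester g f) = permanent (n + m) (\<lambda>r j. sylvester f g (\<rho> r) j)"
    unfolding permanent_def
    by (intro sum.cong refl prod.cong) (auto simp: sylvester_def \<rho>_def Let_def m_def n_def)
  also have "\<dots> = permanent (n + m) (sylvester f g)" by (rule permanent_permute_rows[OF \<rho>])
  finally show ?thesis using False by (simp add: layered_resultant_def add.commute m_def n_def)
qed (auto simp: layered_resultant_def)

section \<open>Finite sums, products and permutations\<close>

lemma prod_lessThan_add: "(\<Prod>i<n + m. F i) = (\<Prod>i<n. F i) * (\<Prod>s<m. F (n + s))"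
  for F :: "nat \<Rightarrow> 'a::comm_monoid_mult"
  by (induction m) (simp_all add: mult.assoc)

lemma sum_lessThan_add: "(\<Sum>i<n + m. F i) = (\<Sum>i<n. F i) + (\<Sum>s<m. F (n + s))"
  for F :: "nat \<Rightarrow> 'a::comm_monoid_add"
  by (induction m) (simp_all add: add.assoc)

lemma prod_atLeast1_add:
  "(\<Prod>i=1..t + j. \<alpha> i) = (\<Prod>i=1..t. \<alpha> i) * (\<Prod>i=1..j. \<alpha> (t + i))" for \<alpha> :: "nat \<Rightarrow> 'a::comm_monoid_mult"
  by (induction j) (auto simp: atLeastAtMostSuc_conv mult_ac)

lemma prod_lessThan_reflect: "(\<Prod>s<m. F (m - s)) = (\<Prod>j=1..m. F j)"
  for F :: "nat \<Rightarrow> 'a::comm_monoid_mult"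
  by (rule prod.reindex_bij_witness[where i = "\<lambda>j. m - j" and j = "\<lambda>s. m - s"]) auto

lemma prod_prod_initial_segments:
  fixes \<alpha> :: "nat \<Rightarrow> 'a::comm_monoid_mult"
  assumes "finite R" and "\<And>r. r \<in> R \<Longrightarrow> k r \<le> m"
  shows "(\<Prod>r\<in>R. \<Prod>i=1..k r. \<alpha> i) = (\<Prod>j=1..m. \<alpha> j ^ card {r\<in>R. j \<le> k r})"
proof -
  have "(\<Prod>i=1..k r. \<alpha> i) = (\<Prod>j=1..m. if j \<le> k r then \<alpha> j else 1)" if "r \<in> R" for r
  proof -
    have "{j\<in>{1..m}. j \<le> k r} = {1..k r}" using assms(2)[OF that] by auto
    then show ?thesis by (simp add: prod.inter_filter[symmetric])
  qed
  then have "(\<Prod>r\<in>R. \<Prod>i=1..k r. \<alpha> i) = (\<Prod>r\<in>R. \<Prod>j=1..m. if j \<le> k r then \<alpha> j else 1)"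
    by (rule prod.cong[OF refl])
  also have "\<dots> = (\<Prod>j=1..m. \<Prod>r\<in>R. if j \<le> k r then \<alpha> j else 1)" by (rule prod.swap)
  also have "\<dots> = (\<Prod>j=1..m. \<alpha> j ^ card {r\<in>R. j \<le> k r})"
    using assms(1) by (simp add: prod.inter_filter[symmetric])
  finally show ?thesis .
qed

lemma sum_card_initial_segments:
  assumes "finite R"
  shows "(\<Sum>j=1..J. card {r\<in>R. j \<le> k r}) = (\<Sum>r\<in>R. min J (k r))"
proof -
  have "(\<Sum>j=1..J. card {r\<in>R. j \<le> k r}) = (\<Sum>j=1..J. \<Sum>r\<in>R. if j \<le> k r then 1 else 0)"
    using assms by (simp add: sum.inter_filter[symmetric])
  also have "\<dots> = (\<Sum>r\<in>R. \<Sum>j=1..J. if j \<le> k r then 1 else 0)" by (rule sum.swap)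
  also have "\<dots> = (\<Sum>r\<in>R. min J (k r))"
  proof (rule sum.cong[OF refl])
    fix r
    have "{j\<in>{1..J}. j \<le> k r} = {1..min J (k r)}" by auto
    then show "(\<Sum>j=1..J. if j \<le> k r then 1 else 0) = min J (k r)"
      by (simp add: sum.inter_filter[symmetric])
  qed
  finally show ?thesis .
qed

lemma double_sum_atLeastLessThan:
  "q \<le> N \<Longrightarrow> 2 * int (\<Sum>{q..<N}) = int (N - q) * (int N + int q - 1)"
proof (induction N)
  case (Suc N)
  then show ?case
    by (cases "q = Suc N") (auto simp: of_nat_diff algebra_simps)
qed simp

lemma double_sum_subset_lessThan_le:
  "finite A \<Longrightarrow> A \<subseteq> {..<k} \<Longrightarrow> 2 * int (\<Sum>A) \<le> int (card A) * (2 * int k - int (card A) - 1)"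
proof (induction k arbitrary: A)
  case (Suc k)
  show ?case
  proof (cases "k \<in> A")
    case True
    have "A - {k} \<subseteq> {..<k}" using Suc.prems(2) by (auto simp: less_Suc_eq)
    then have IH: "2 * int (\<Sum>(A - {k})) \<le> int (card A - 1) * (2 * int k - int (card A - 1) - 1)"
      using Suc.IH[of "A - {k}"] Suc.prems(1) True by simp
    have "card A \<ge> 1" using True Suc.prems(1) by (auto simp: Suc_le_eq card_gt_0_iff)
    moreover have "\<Sum>A = k + \<Sum>(A - {k})" using True Suc.prems(1) by (simp add: sum.remove)
    ultimately show ?thesis using IH by (simp add: of_nat_diff algebra_simps)
  next
    case False
    then have "A \<subseteq> {..<k}" using Suc.prems(2) by (auto simp: less_Suc_eq)
    then have "2 * int (\<Sum>A) \<le> int (card A) * (2 * int k - int (card A) - 1)"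
      using Suc.IH Suc.prems(1) by blast
    also have "\<dots> \<le> int (card A) * (2 * int (Suc k) - int (card A) - 1)"
      by (intro mult_left_mono) auto
    finally show ?thesis .
  qed
qed simp

lemma permutes_above:
  assumes "\<sigma> permutes {..<N}"
  shows permutes_card_above: "card {i. i < N \<and> q \<le> \<sigma> i} = N - q"
    and permutes_sum_above: "(\<Sum>i | i < N \<and> q \<le> \<sigma> i. \<sigma> i) = \<Sum>{q..<N}"
proof -
  let ?Q = "{i. i < N \<and> q \<le> \<sigma> i}"
  have img: "\<sigma> ` {..<N} = {..<N}" using assms(1) by (rule permutes_image)
  have "\<sigma> ` ?Q = {q..<N}"
  proof
    show "\<sigma> ` ?Q \<subseteq> {q..<N}" using img by auto
    show "{q..<N} \<subseteq> \<sigma> ` ?Q"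
    proof
      fix x assume x: "x \<in> {q..<N}"
      then obtain i where "i < N" "x = \<sigma> i" using img by (metis atLeastLessThan_iff imageE lessThan_iff)
      then show "x \<in> \<sigma> ` ?Q" using x by auto
    qed
  qed
  moreover have "inj_on \<sigma> ?Q" using permutes_inj_on[OF assms(1)] by (auto intro: inj_on_subset)
  ultimately show "card ?Q = N - q" "(\<Sum>i\<in>?Q. \<sigma> i) = \<Sum>{q..<N}"
    using card_image[of \<sigma> ?Q] sum.reindex[of \<sigma> ?Q "\<lambda>x. x"] by simp_all
qed

lemma bij_betw_rank:
  fixes h :: "'a \<Rightarrow> nat"
  assumes "finite S" and "inj_on h S"
  shows "bij_betw (\<lambda>x. card {y\<in>S. h x \<le> h y}) S {1..card S}"
proof -
  let ?rk = "\<lambda>x. card {y\<in>S. h x \<le> h y}"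
  have rk_less: "?rk y < ?rk x" if "x \<in> S" "h x < h y" for x y
  proof (rule psubset_card_mono)
    have "x \<in> {z\<in>S. h x \<le> h z}" "x \<notin> {z\<in>S. h y \<le> h z}" using that by auto
    moreover have "{z\<in>S. h y \<le> h z} \<subseteq> {z\<in>S. h x \<le> h z}" using that(2) by auto
    ultimately show "{z\<in>S. h y \<le> h z} \<subset> {z\<in>S. h x \<le> h z}" by blast
  qed (use \<open>finite S\<close> in simp)
  have inj: "inj_on ?rk S"
  proof (rule inj_onI, rule ccontr)
    fix x y assume xy: "x \<in> S" "y \<in> S" "?rk x = ?rk y" "x \<noteq> y"
    then have "h x < h y \<or> h y < h x" using inj_onD[OF \<open>inj_on h S\<close>] by (meson linorder_neqE_nat)
    then show False using rk_less[of x y] rk_less[of y x] xy by auto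
  qed
  have "?rk ` S \<subseteq> {1..card S}"
    using \<open>finite S\<close> by (auto simp: Suc_le_eq card_gt_0_iff intro: card_mono)
  moreover have "card (?rk ` S) = card {1..card S}" using card_image[OF inj] by simp
  ultimately have "?rk ` S = {1..card S}" by (intro card_subset_eq) auto
  then show ?thesis using inj by (simp add: bij_betw_def)
qed

lemma sum_by_rank:
  fixes rk :: "'a \<Rightarrow> nat"
  assumes "bij_betw rk A {1..m}"
  shows "(\<Sum>j=1..J. \<Sum>s\<in>A. if rk s = j then b s else 0) = (\<Sum>s\<in>{s\<in>A. rk s \<le> J}. b s)"
proof -
  have "finite A" using bij_betw_finite[OF assms] by simp
  have rk: "1 \<le> rk s" if "s \<in> A" for s using assms that by (auto simp: bij_betw_def)
  have "(\<Sum>j=1..J. \<Sum>s\<in>A. if rk s = j then b s else 0) = (\<Sum>s\<in>A. \<Sum>j=1..J. if rk s = j then b s else 0)"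
    by (rule sum.swap)
  also have "\<dots> = (\<Sum>s\<in>A. if rk s \<le> J then b s else 0)"
    using rk by (intro sum.cong refl) (simp add: sum.delta')
  finally show ?thesis using \<open>finite A\<close> by (simp add: sum.inter_filter)
qed

lemma card_rank_le:
  fixes h :: "'a \<Rightarrow> nat"
  assumes "finite S" and "inj_on h S" and "J \<le> card S"
  defines "rk x \<equiv> card {y\<in>S. h x \<le> h y}"
  shows "card {x\<in>S. rk x \<le> J} = J"
proof -
  have rk: "bij_betw rk S {1..card S}" unfolding rk_def by (rule bij_betw_rank[OF assms(1,2)])
  then have "rk ` {x\<in>S. rk x \<le> J} = {1..J}"
    using assms(3) by (auto simp: bij_betw_def image_iff) (metis atLeastAtMost_iff imageE le_trans)
  moreover have "inj_on rk {x\<in>S. rk x \<le> J}" using rk by (auto simp: bij_betw_def inj_on_def)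
  ultimately show ?thesis using card_image by fastforce
qed

lemma less_card_sublevel_iff:
  fixes k :: "nat \<Rightarrow> 'a::linorder"
  assumes mono: "\<And>s s'. s \<le> s' \<Longrightarrow> s' < m \<Longrightarrow> k s \<le> k s'" and "s < m"
  shows "s < card {s'\<in>{..<m}. k s' \<le> r} \<longleftrightarrow> k s \<le> r"
proof -
  define D where "D = {s'\<in>{..<m}. k s' \<le> r}"
  have down: "s' \<in> D" if "s \<in> D" "s' \<le> s" for s s'
    using that mono[of s' s] by (auto simp: D_def)
  obtain N where "D = {..<N}"
  proof (cases "D = {}")
    case False
    define M where "M = Max D"
    have "finite D" by (simp add: D_def)
    then have "M \<in> D" "\<And>x. x \<in> D \<Longrightarrow> x \<le> M" using False by (simp_all add: M_def)
    then have "D = {..<Suc M}" using down[OF \<open>M \<in> D\<close>] by (auto simp: less_Suc_eq_le)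
    then show ?thesis by (rule that)
  qed (use that[of 0] in simp)
  moreover have "s \<in> D \<longleftrightarrow> k s \<le> r" using \<open>s < m\<close> by (simp add: D_def)
  ultimately show ?thesis unfolding D_def[symmetric] by simp
qed

lemma card_sublevel_dual:
  fixes k :: "nat \<Rightarrow> nat"
  assumes mono: "\<And>s s'. s \<le> s' \<Longrightarrow> s' < m \<Longrightarrow> k s \<le> k s'" and "s < m" and "k s \<le> n"
  shows "card {r\<in>{..<n}. card {s'\<in>{..<m}. k s' \<le> r} \<le> s} = k s"
proof -
  have "{r\<in>{..<n}. card {s'\<in>{..<m}. k s' \<le> r} \<le> s} = {..<k s}"
    using less_card_sublevel_iff[OF mono \<open>s < m\<close>] \<open>k s \<le> n\<close> by (auto simp: not_less[symmetric])
  then show ?thesis by simp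
qed

text \<open>Merging the \<open>f\<close>-rows and the \<open>g\<close>-rows of the Sylvester matrix: \<open>g\<close>-row \<open>s\<close> is shifted by
  \<open>k s\<close>, and \<open>f\<close>-row \<open>r\<close> by the number of \<open>g\<close>-rows that it passes.\<close>

lemma shuffle_permutes:
  fixes k :: "nat \<Rightarrow> nat"
  assumes mono: "\<And>s s'. s \<le> s' \<Longrightarrow> s' < m \<Longrightarrow> k s \<le> k s'" and bound: "\<And>s. s < m \<Longrightarrow> k s \<le> n"
  defines "a r \<equiv> card {s\<in>{..<m}. k s \<le> r}"
  shows "(\<lambda>i. if i < n then i + a i else if i < n + m then (i - n) + k (i - n) else i) permutes {..<n + m}"
proof -
  define \<sigma> where "\<sigma> i = (if i < n then i + a i else if i < n + m then (i - n) + k (i - n) else i)" for i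
  have a_iff: "s < a r \<longleftrightarrow> k s \<le> r" if "s < m" for s r
    unfolding a_def by (rule less_card_sublevel_iff[OF mono that])
  have a_le: "a r \<le> m" for r
    unfolding a_def using card_mono[OF finite_lessThan, of "{s\<in>{..<m}. k s \<le> r}" m] by auto
  have f_mono: "r + a r < r' + a r'" if "r < r'" for r r'
    using that unfolding a_def by (intro add_less_le_mono card_mono) auto
  have g_mono: "s + k s < s' + k s'" if "s < s'" "s' < m" for s s'
    using mono[of s s'] that by simp
  have disjoint: "r + a r \<noteq> s + k s" if "r < n" "s < m" for r s
    using a_iff[OF that(2), of r] by (cases "k s \<le> r") auto
  have neq: "\<sigma> i \<noteq> \<sigma> j" if "i < j" "j < n + m" for i j
  proof (cases "j < n")
    case True
    then show ?thesis using f_mono[OF \<open>i < j\<close>] that by (simp add: \<sigma>_def)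
  next
    case False
    show ?thesis
    proof (cases "i < n")
      case True
      then show ?thesis using disjoint[of i "j - n"] False that by (simp add: \<sigma>_def)
    next
      case False
      then have "i - n < j - n" "j - n < m" using \<open>\<not> j < n\<close> that by auto
      then show ?thesis using g_mono[of "i - n" "j - n"] False \<open>\<not> j < n\<close> that by (simp add: \<sigma>_def)
    qed
  qed
  have "inj_on \<sigma> {..<n + m}"
    by (rule inj_onI) (metis neq lessThan_iff linorder_neqE_nat)
  moreover have "\<sigma> i < n + m" if "i < n + m" for i
  proof (cases "i < n")
    case False
    then have "k (i - n) \<le> n" using bound that by simp
    then show ?thesis using False that by (simp add: \<sigma>_def)
  qed (use a_le[of i] in \<open>simp add: \<sigma>_def\<close>)
  then have "\<sigma> ` {..<n + m} \<subseteq> {..<n + m}" by auto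
  ultimately have "bij_betw \<sigma> {..<n + m} {..<n + m}"
    by (simp add: bij_betw_def endo_inj_surj)
  then have "\<sigma> permutes {..<n + m}" by (rule bij_imp_permutes) (simp add: \<sigma>_def)
  then show ?thesis by (simp add: \<sigma>_def[abs_def])
qed

lemma antitone_of_step:
  fixes \<alpha> :: "nat \<Rightarrow> 'a::order"
  assumes step: "\<And>i. 1 \<le> i \<Longrightarrow> i < m \<Longrightarrow> \<alpha> (Suc i) \<le> \<alpha> i"
    and "1 \<le> i" "i \<le> j" "j \<le> m"
  shows "\<alpha> j \<le> \<alpha> i"
  using assms(3,4)
proof (induction j rule: dec_induct)
  case (step j)
  then show ?case using assms(2) order_trans[OF assms(1)[of j]] by simp
qed simp

section \<open>Tropical roots\<close>

text \<open>\<open>\<alpha> 1 \<ge> \<dots> \<ge> \<alpha> m\<close> are tropical roots of the polynomial with coefficients \<open>c 0, \<dots>, c m\<close>: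
  each \<open>c a\<close> is bounded by \<open>c m * \<alpha> 1 * \<dots> * \<alpha> (m - a)\<close>, the coefficient of \<open>\<lambda> ^ a\<close> in
  \<open>c m * (\<lambda> + \<alpha> 1) * \<dots> * (\<lambda> + \<alpha> m)\<close>, with equality wherever the sequence of roots drops
  (the sentinel \<open>\<alpha> (m + 1) = 0\<close> makes \<open>a = 0\<close> such a place iff \<open>\<alpha> m \<noteq> 0\<close>); the largest root
  \<open>\<alpha> 1\<close> is the least \<open>B\<close> with \<open>c a \<le> c m * B ^ (m - a)\<close> for all \<open>a < m\<close>.\<close>

definition tropical_roots :: "nat \<Rightarrow> (nat \<Rightarrow> 'g::linordered_ab_group_add trop) \<Rightarrow> (nat \<Rightarrow> 'g trop) \<Rightarrow> bool" where
  "tropical_roots m c \<alpha> \<longleftrightarrow>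
     (\<forall>i. 1 \<le> i \<longrightarrow> i < m \<longrightarrow> \<alpha> (Suc i) \<le> \<alpha> i) \<and> \<alpha> (Suc m) = 0
   \<and> (\<forall>a\<le>m. c a \<le> c m * (\<Prod>i=1..m - a. \<alpha> i))
   \<and> (\<forall>a\<le>m. (a = m \<or> \<alpha> (m - a) \<noteq> \<alpha> (Suc (m - a))) \<longrightarrow> c a = c m * (\<Prod>i=1..m - a. \<alpha> i))
   \<and> (\<forall>B. 1 \<le> m \<longrightarrow> (\<forall>a<m. c a \<le> c m * B ^ (m - a)) \<longrightarrow> \<alpha> 1 \<le> B)"

lemma tropical_roots_of_monomial:
  "(\<And>a. a < m \<Longrightarrow> c a = 0) \<Longrightarrow> tropical_roots m c (\<lambda>_. 0)"
  unfolding tropical_roots_def by (auto dest: le_imp_less_or_eq)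

text \<open>Inductive step of the construction: if \<open>r\<close> is the largest slope \<open>(c a / c m) ^ (1 / (m - a))\<close>,
  attained at \<open>s\<close>, then \<open>m - s\<close> copies of \<open>r\<close> followed by the roots \<open>\<alpha>'\<close> of \<open>c 0, \<dots>, c s\<close> are
  roots of \<open>c 0, \<dots>, c m\<close>.\<close>

locale tropical_roots_extension =
  fixes c \<alpha>' :: "nat \<Rightarrow> 'g::linordered_ab_group_add trop" and m s :: nat and r :: "'g trop"
  assumes s_less: "s < m" and lead_nonzero: "c m \<noteq> 0"
    and bound: "\<And>a. a < m \<Longrightarrow> c a \<le> c m * r ^ (m - a)"
    and attained: "c s = c m * r ^ (m - s)"
    and roots: "tropical_roots s c \<alpha>'"
begin

definition \<alpha> :: "nat \<Rightarrow> 'g trop" where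
  "\<alpha> i = (if i \<le> m - s then r else \<alpha>' (i - (m - s)))"

lemma roots':
  shows antitone': "\<And>i. 1 \<le> i \<Longrightarrow> i < s \<Longrightarrow> \<alpha>' (Suc i) \<le> \<alpha>' i"
    and last': "\<alpha>' (Suc s) = 0"
    and le': "\<And>a. a \<le> s \<Longrightarrow> c a \<le> c s * (\<Prod>i=1..s - a. \<alpha>' i)"
    and eq': "\<And>a. a \<le> s \<Longrightarrow> a = s \<or> \<alpha>' (s - a) \<noteq> \<alpha>' (Suc (s - a))
                \<Longrightarrow> c a = c s * (\<Prod>i=1..s - a. \<alpha>' i)"
    and least': "\<And>B. 1 \<le> s \<Longrightarrow> \<forall>a<s. c a \<le> c s * B ^ (s - a) \<Longrightarrow> \<alpha>' 1 \<le> B"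
  using roots unfolding tropical_roots_def by blast+

lemma prod_\<alpha>_low: "j \<le> m - s \<Longrightarrow> (\<Prod>i=1..j. \<alpha> i) = r ^ j"
  by (simp add: \<alpha>_def)

lemma prod_\<alpha>_shift: "(\<Prod>i=1..m - s + j. \<alpha> i) = r ^ (m - s) * (\<Prod>i=1..j. \<alpha>' i)"
  unfolding prod_atLeast1_add prod_\<alpha>_low[OF order_refl] by (simp add: \<alpha>_def)

lemma \<alpha>_shift: "1 \<le> j \<Longrightarrow> \<alpha> (m - s + j) = \<alpha>' j"
  by (simp add: \<alpha>_def)

lemma \<alpha>_antitone: "1 \<le> i \<Longrightarrow> i < m \<Longrightarrow> \<alpha> (Suc i) \<le> \<alpha> i"
proof (cases "i = m - s")
  case True
  assume "i < m"
  have "c a \<le> c s * r ^ (s - a)" if "a < s" for a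
    using bound[of a] that s_less attained by (simp add: power_add[symmetric] mult.assoc)
  moreover have "1 \<le> s" using \<open>i < m\<close> True by simp
  ultimately have "\<alpha>' 1 \<le> r" using least' by blast
  then show ?thesis using True by (simp add: \<alpha>_def)
next
  case False
  assume "1 \<le> i" "i < m"
  then show ?thesis using False antitone'[of "i - (m - s)"] s_less by (auto simp: \<alpha>_def Suc_diff_le)
qed

lemma \<alpha>_last: "\<alpha> (Suc m) = 0"
  using last' s_less by (simp add: \<alpha>_def)

lemma coeff_le: "a \<le> m \<Longrightarrow> c a \<le> c m * (\<Prod>i=1..m - a. \<alpha> i)"
proof (cases "s \<le> a")
  case True
  assume "a \<le> m"
  moreover have "(\<Prod>i=1..m - a. \<alpha> i) = r ^ (m - a)" using True by (intro prod_\<alpha>_low) simp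
  ultimately show ?thesis using bound[of a] by (cases "a = m") simp_all
next
  case False
  then have ma: "m - a = m - s + (s - a)" using s_less by simp
  have "c a \<le> c s * (\<Prod>i=1..s - a. \<alpha>' i)" using le' False by simp
  also have "\<dots> = c m * (\<Prod>i=1..m - a. \<alpha> i)" by (simp only: ma prod_\<alpha>_shift attained mult.assoc)
  finally show ?thesis .
qed

lemma coeff_eq:
  assumes "a \<le> m" and breakpoint: "a = m \<or> \<alpha> (m - a) \<noteq> \<alpha> (Suc (m - a))"
  shows "c a = c m * (\<Prod>i=1..m - a. \<alpha> i)"
proof (cases "s \<le> a")
  case True
  have "a = s \<or> a = m"
  proof (rule ccontr)
    assume "\<not> (a = s \<or> a = m)"
    moreover from this have "Suc (m - a) \<le> m - s" using True assms(1) by arith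
    ultimately show False using breakpoint by (simp add: \<alpha>_def)
  qed
  then show ?thesis using attained prod_\<alpha>_low[OF order_refl] by auto
next
  case False
  then have ma: "m - a = m - s + (s - a)" using s_less by simp
  have "\<alpha> (m - a) = \<alpha>' (s - a)" "\<alpha> (Suc (m - a)) = \<alpha>' (Suc (s - a))"
    using False \<alpha>_shift[of "s - a"] \<alpha>_shift[of "Suc (s - a)"] by (simp_all add: ma)
  then have "\<alpha>' (s - a) \<noteq> \<alpha>' (Suc (s - a))" using breakpoint False s_less by auto
  then have "c a = c s * (\<Prod>i=1..s - a. \<alpha>' i)" using False by (intro eq') simp_all
  then show ?thesis by (simp only: ma prod_\<alpha>_shift attained mult.assoc)
qed

lemma \<alpha>_least: "\<forall>a<m. c a \<le> c m * B ^ (m - a) \<Longrightarrow> \<alpha> 1 \<le> B"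
proof -
  assume "\<forall>a<m. c a \<le> c m * B ^ (m - a)"
  then have "c m * r ^ (m - s) \<le> c m * B ^ (m - s)" using s_less unfolding attained[symmetric] by blast
  then have "r ^ (m - s) \<le> B ^ (m - s)" using trop_mult_le_cancel_right[OF lead_nonzero] by (metis mult.commute)
  then have "r \<le> B" by (rule trop_power_le_imp_le[rotated]) (use s_less in simp)
  moreover have "1 \<le> m - s" using s_less by simp
  ultimately show ?thesis by (simp add: \<alpha>_def)
qed

lemma tropical_roots_\<alpha>: "tropical_roots m c \<alpha>"
  unfolding tropical_roots_def using \<alpha>_antitone \<alpha>_last coeff_le coeff_eq \<alpha>_least by blast

end

lemma trop_root_of_ratio:
  fixes b c :: "'g::linordered_ab_group_add trop"
  assumes "c \<noteq> 0" and "k dvd d" and "b = y ^ d" and "c = z ^ d"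
  shows "\<exists>\<rho>. b = c * \<rho> ^ k"
proof (cases "d = 0")
  case False
  obtain w where w: "z * w = 1"
    using trop_nonzero_invertible[of z] assms(1,4) False by auto
  have "c * ((y * w) ^ (d div k)) ^ k = (z * w) ^ d * y ^ d"
    using assms(2-4) by (simp add: power_mult[symmetric] power_mult_distrib mult_ac)
  then show ?thesis using w assms(3) by (metis mult_1 power_one)
qed (use assms in \<open>auto intro: exI[of _ 1]\<close>)

lemma tropical_roots_exist:
  fixes c :: "nat \<Rightarrow> 'g::linordered_ab_group_add trop"
  assumes "c m \<noteq> 0" and "\<And>k. 1 \<le> k \<Longrightarrow> k \<le> m \<Longrightarrow> k dvd d"
    and powers: "\<And>a. \<exists>y. c a = y ^ d"
  shows "\<exists>\<alpha>. tropical_roots m c \<alpha>"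
  using assms(1,2)
proof (induction m rule: less_induct)
  case (less m)
  define A where "A = {a. a < m \<and> c a \<noteq> 0}"
  show ?case
  proof (cases "A = {}")
    case True
    then show ?thesis using tropical_roots_of_monomial[of m c] by (auto simp: A_def)
  next
    case False
    have "\<exists>\<rho>. c a = c m * \<rho> ^ (m - a)" if "a < m" for a
      using powers[of a] powers[of m] less.prems that
      by (auto intro: trop_root_of_ratio[of "c m" "m - a" d])
    then obtain \<rho> where c_\<rho>: "\<And>a. a < m \<Longrightarrow> c a = c m * \<rho> a ^ (m - a)" by metis
    have "finite A" by (simp add: A_def)
    then have "Max (\<rho> ` A) \<in> \<rho> ` A" using False by simp
    then obtain s where "s \<in> A" and s_Max: "\<rho> s = Max (\<rho> ` A)" by auto
    then have "s < m" "c s \<noteq> 0" by (auto simp: A_def)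
    have s_max: "\<rho> a \<le> \<rho> s" if "a \<in> A" for a
      using \<open>finite A\<close> that by (simp add: s_Max)
    have "c a \<le> c m * \<rho> s ^ (m - a)" if "a < m" for a
    proof (cases "a \<in> A")
      case True
      then show ?thesis using c_\<rho>[OF that] s_max trop_power_mono trop_mult_left_mono by metis
    qed (use that in \<open>simp add: A_def\<close>)
    moreover obtain \<alpha>' where "tropical_roots s c \<alpha>'"
      using less.IH[OF \<open>s < m\<close> \<open>c s \<noteq> 0\<close>] less.prems(2) \<open>s < m\<close> by auto
    ultimately interpret tropical_roots_extension c \<alpha>' m s "\<rho> s"
      using \<open>s < m\<close> less.prems(1) c_\<rho>[OF \<open>s < m\<close>] by unfold_locales auto
    show ?thesis using tropical_roots_\<alpha> by blast
  qed
qed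

section \<open>An upper bound for the terms of the Sylvester permanent\<close>

text \<open>Row \<open>r < n\<close> of the Sylvester matrix holds the coefficients of \<open>f\<close> in the columns
  \<open>r, \<dots>, r + m\<close>, and row \<open>n + s\<close> those of \<open>g\<close> in the columns \<open>s, \<dots>, s + n\<close>.\<close>

definition sylvester_banded :: "nat \<Rightarrow> nat \<Rightarrow> (nat \<Rightarrow> nat) \<Rightarrow> bool" where
  "sylvester_banded n m \<sigma> \<longleftrightarrow>
     (\<forall>r<n. r \<le> \<sigma> r \<and> \<sigma> r \<le> r + m) \<and> (\<forall>s<m. s \<le> \<sigma> (n + s) \<and> \<sigma> (n + s) \<le> s + n)"

lemma sylvester_term_nonzero_imp_banded:
  fixes f g :: "'a::comm_semiring_1 poly"
  assumes "degree f = m" and "degree g = n" and "(\<Prod>i<n + m. sylvester f g i (\<sigma> i)) \<noteq> 0"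
  shows "sylvester_banded n m \<sigma>"
proof -
  have nz: "sylvester f g i (\<sigma> i) \<noteq> 0" if "i < n + m" for i
    using assms(3) that by (metis finite_lessThan lessThan_iff prod_zero)
  have "r \<le> \<sigma> r \<and> \<sigma> r \<le> r + m" if "r < n" for r
    using nz[of r] that assms(1,2) le_degree[of f "\<sigma> r - r"]
    by (auto simp: sylvester_def split: if_splits)
  moreover have "s \<le> \<sigma> (n + s) \<and> \<sigma> (n + s) \<le> s + n" if "s < m" for s
    using nz[of "n + s"] that assms(1,2) le_degree[of g "\<sigma> (n + s) - s"]
    by (auto simp: sylvester_def Let_def split: if_splits)
  ultimately show ?thesis unfolding sylvester_banded_def by blast
qed

lemma sylvester_term_banded_eq:
  fixes f g :: "'a::comm_semiring_1 poly"
  assumes "degree g = n" and "sylvester_banded n m \<sigma>"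
  shows "(\<Prod>i<n + m. sylvester f g i (\<sigma> i))
    = (\<Prod>r<n. coeff f (\<sigma> r - r)) * (\<Prod>s<m. coeff g (\<sigma> (n + s) - s))"
  using assms unfolding prod_lessThan_add sylvester_banded_def
  by (intro arg_cong2[where f = "(*)"] prod.cong) (auto simp: sylvester_def Let_def)

lemma banded_shift_sum_eq:
  assumes \<sigma>: "\<sigma> permutes {..<n + m}" and band: "sylvester_banded n m \<sigma>"
  shows "(\<Sum>r<n. m + r - \<sigma> r) = (\<Sum>s<m. \<sigma> (n + s) - s)"
proof -
  have "(\<Sum>i<n + m. \<sigma> i) = (\<Sum>i<n + m. i)"
    using sum.reindex_bij_betw[OF permutes_imp_bij[OF \<sigma>], of "\<lambda>i. i"] by simp
  then have "(\<Sum>r<n. int (\<sigma> r)) + (\<Sum>s<m. int (\<sigma> (n + s))) = (\<Sum>r<n. int r) + (\<Sum>s<m. int (n + s))"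
    unfolding sum_lessThan_add of_nat_sum[symmetric] of_nat_add[symmetric] by simp
  moreover have "int (\<Sum>r<n. m + r - \<sigma> r) = (\<Sum>r<n. int m + int r - int (\<sigma> r))"
    "int (\<Sum>s<m. \<sigma> (n + s) - s) = (\<Sum>s<m. int (\<sigma> (n + s)) - int s)"
    using band unfolding sylvester_banded_def of_nat_sum by (auto intro!: sum.cong simp: of_nat_diff)
  ultimately have "int (\<Sum>r<n. m + r - \<sigma> r) = int (\<Sum>s<m. \<sigma> (n + s) - s)"
    by (simp add: sum_subtractf sum.distrib algebra_simps)
  then show ?thesis by (simp only: of_nat_eq_iff)
qed

lemma permutes_columns_from_Min:
  assumes \<sigma>: "\<sigma> permutes {..<n + m}" and T: "T \<subseteq> {..<m}" "T \<noteq> {}"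
    and top: "\<forall>s\<in>T. \<forall>s'<m. \<sigma> (n + s) \<le> \<sigma> (n + s') \<longrightarrow> s' \<in> T"
  defines "q \<equiv> Min ((\<lambda>s. \<sigma> (n + s)) ` T)"
  shows "q < n + m"
    and "card {r. r < n \<and> q \<le> \<sigma> r} + card T = n + m - q"
    and "(\<Sum>r | r < n \<and> q \<le> \<sigma> r. \<sigma> r) + (\<Sum>s\<in>T. \<sigma> (n + s)) = \<Sum>{q..<n + m}"
proof -
  define P where "P = {r. r < n \<and> q \<le> \<sigma> r}"
  have fin: "finite T" "finite P" using T(1) finite_subset by (auto simp: P_def)
  have "q \<in> (\<lambda>s. \<sigma> (n + s)) ` T" unfolding q_def using fin T(2) by (intro Min_in) auto
  then obtain s0 where "s0 \<in> T" "\<sigma> (n + s0) = q" by auto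
  have inT: "s \<in> T \<longleftrightarrow> q \<le> \<sigma> (n + s)" if "s < m" for s
  proof
    show "s \<in> T \<Longrightarrow> q \<le> \<sigma> (n + s)" using fin(1) by (simp add: q_def)
    show "q \<le> \<sigma> (n + s) \<Longrightarrow> s \<in> T" using top \<open>s0 \<in> T\<close> \<open>\<sigma> (n + s0) = q\<close> that by blast
  qed
  have Q: "{i. i < n + m \<and> q \<le> \<sigma> i} = P \<union> (\<lambda>s. n + s) ` T"
  proof (intro set_eqI iffI)
    fix i assume "i \<in> {i. i < n + m \<and> q \<le> \<sigma> i}"
    then show "i \<in> P \<union> (\<lambda>s. n + s) ` T"
      using inT[of "i - n"] by (cases "i < n") (auto simp: P_def image_iff intro: bexI[of _ "i - n"])
  qed (use T(1) inT in \<open>auto simp: P_def\<close>)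
  have disj: "P \<inter> (\<lambda>s. n + s) ` T = {}" by (auto simp: P_def)
  have "n + s0 < n + m" using T(1) \<open>s0 \<in> T\<close> by auto
  then have "\<sigma> (n + s0) \<in> {..<n + m}" by (intro permutes_in_image[OF \<sigma>, THEN iffD2]) simp
  then show "q < n + m" using \<open>\<sigma> (n + s0) = q\<close> by simp
  show "card P + card T = n + m - q"
    using permutes_card_above[OF \<sigma>, of q] fin disj by (simp add: Q card_Un_disjoint card_image)
  show "(\<Sum>r\<in>P. \<sigma> r) + (\<Sum>s\<in>T. \<sigma> (n + s)) = \<Sum>{q..<n + m}"
    using permutes_sum_above[OF \<sigma>, of q] fin disj by (simp add: Q sum.union_disjoint sum.reindex)
qed

lemma sum_min_le_split:
  assumes "finite A" and "P \<subseteq> A"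
  shows "(\<Sum>r\<in>A. min J (f r)) \<le> (\<Sum>r\<in>P. f r) + J * card (A - P)"
proof -
  have "(\<Sum>r\<in>A. min J (f r)) = (\<Sum>r\<in>P. min J (f r)) + (\<Sum>r\<in>A - P. min J (f r))"
    using sum.subset_diff[OF assms(2,1)] by (simp add: add.commute)
  also have "\<dots> \<le> (\<Sum>r\<in>P. f r) + (\<Sum>r\<in>A - P. J)"
    by (intro add_mono sum_mono) auto
  finally show ?thesis by (simp add: mult.commute)
qed

text \<open>The columns from \<open>q\<close> on are taken by the \<open>card T\<close> rows in \<open>T\<close> and by the \<open>p\<close> rows of \<open>f\<close>
  reaching them; the claim follows by bounding the row indices of both groups from above.\<close>

lemma banded_prefix_le:
  assumes \<sigma>: "\<sigma> permutes {..<n + m}" and band: "sylvester_banded n m \<sigma>"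
    and T: "T \<subseteq> {..<m}" "T \<noteq> {}"
    and top: "\<And>s s'. s \<in> T \<Longrightarrow> s' < m \<Longrightarrow> \<sigma> (n + s) \<le> \<sigma> (n + s') \<Longrightarrow> s' \<in> T"
  shows "(\<Sum>r<n. min (card T) (m + r - \<sigma> r)) \<le> (\<Sum>s\<in>T. \<sigma> (n + s) - s)"
proof -
  define q where "q = Min ((\<lambda>s. \<sigma> (n + s)) ` T)"
  define P where "P = {r. r < n \<and> q \<le> \<sigma> r}"
  define J p where "J = card T" and "p = card P"
  have "\<forall>s\<in>T. \<forall>s'<m. \<sigma> (n + s) \<le> \<sigma> (n + s') \<longrightarrow> s' \<in> T" using top by blast
  note cols = permutes_columns_from_Min[OF \<sigma> T(1) T(2) this, folded q_def P_def J_def p_def]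
  have "P \<subseteq> {..<n}" by (auto simp: P_def)
  then have "p \<le> n" "card ({..<n} - P) = n - p"
    unfolding p_def using card_mono[OF finite_lessThan] by (fastforce, simp add: card_Diff_subset finite_subset)
  then have "(\<Sum>r<n. min J (m + r - \<sigma> r)) \<le> (\<Sum>r\<in>P. m + r - \<sigma> r) + J * (n - p)"
    using sum_min_le_split[OF finite_lessThan \<open>P \<subseteq> {..<n}\<close>, of J "\<lambda>r. m + r - \<sigma> r"] by simp
  then have "int (\<Sum>r<n. min J (m + r - \<sigma> r)) \<le> int ((\<Sum>r\<in>P. m + r - \<sigma> r) + J * (n - p))"
    by (simp only: of_nat_le_iff)
  then have lhs: "int (\<Sum>r<n. min J (m + r - \<sigma> r)) \<le> int (\<Sum>r\<in>P. m + r - \<sigma> r) + int J * (int n - int p)"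
    using \<open>p \<le> n\<close> by (simp add: of_nat_diff)
  have q_eq: "int q = int n + int m - int p - int J" using cols(1,2) by simp
  have "int (\<Sum>r\<in>P. m + r - \<sigma> r) = (\<Sum>r\<in>P. int m + int r - int (\<sigma> r))"
    unfolding of_nat_sum using band by (intro sum.cong) (auto simp: P_def sylvester_banded_def of_nat_diff)
  then have "int (\<Sum>r\<in>P. m + r - \<sigma> r) = int p * int m + int (\<Sum>P) - int (\<Sum>r\<in>P. \<sigma> r)"
    by (simp add: sum_subtractf sum.distrib p_def of_nat_sum)
  moreover have "int (\<Sum>s\<in>T. \<sigma> (n + s) - s) = (\<Sum>s\<in>T. int (\<sigma> (n + s)) - int s)"
    unfolding of_nat_sum using band T(1) by (intro sum.cong) (auto simp: sylvester_banded_def of_nat_diff)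
  then have "int (\<Sum>s\<in>T. \<sigma> (n + s) - s) = int (\<Sum>s\<in>T. \<sigma> (n + s)) - int (\<Sum>T)"
    by (simp add: sum_subtractf of_nat_sum)
  moreover have "int (\<Sum>r\<in>P. \<sigma> r) + int (\<Sum>s\<in>T. \<sigma> (n + s)) = int (\<Sum>{q..<n + m})"
    using cols(3) by (simp only: of_nat_add[symmetric])
  moreover have "2 * int (\<Sum>{q..<n + m}) = 2 * int p * int n + 2 * int p * int m - int p * int p
      - 2 * int p * int J - int p + 2 * int J * int n + 2 * int J * int m - int J * int J - int J"
    using double_sum_atLeastLessThan[of q "n + m"] cols(1,2) by (simp add: of_nat_diff q_eq algebra_simps)
  moreover have "2 * int (\<Sum>P) \<le> 2 * int p * int n - int p * int p - int p"
    using double_sum_subset_lessThan_le[OF _ \<open>P \<subseteq> {..<n}\<close>] by (simp add: p_def P_def algebra_simps)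
  moreover have "2 * int (\<Sum>T) \<le> 2 * int J * int m - int J * int J - int J"
    using double_sum_subset_lessThan_le[OF _ T(1)] T(1) finite_subset
    by (fastforce simp: J_def algebra_simps)
  moreover have "int J * (int n - int p) = int J * int n - int p * int J" by (simp add: algebra_simps)
  ultimately show ?thesis using lhs unfolding J_def by linarith
qed

lemma trop_prod_power_le_of_majorized:
  fixes \<alpha> :: "nat \<Rightarrow> 'g::linordered_ab_group_add trop" and u v :: "nat \<Rightarrow> nat"
  assumes "\<And>i. 1 \<le> i \<Longrightarrow> i < m \<Longrightarrow> \<alpha> (Suc i) \<le> \<alpha> i"
    and "\<And>J. J \<le> m \<Longrightarrow> (\<Sum>j=1..J. u j) \<le> (\<Sum>j=1..J. v j)"
    and "(\<Sum>j=1..m. u j) = (\<Sum>j=1..m. v j)"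
  shows "(\<Prod>j=1..m. \<alpha> j ^ u j) \<le> (\<Prod>j=1..m. \<alpha> j ^ v j)"
  using assms
proof (induction m arbitrary: u)
  case (Suc m)
  show ?case
  proof (cases m)
    case 0
    then show ?thesis using Suc.prems(3) by simp
  next
    case (Suc m')
    have prefix: "(\<Sum>j=1..m. u j) \<le> (\<Sum>j=1..m. v j)" using Suc.prems(2) by simp
    have total: "(\<Sum>j=1..m. u j) + u (Suc m) = (\<Sum>j=1..m. v j) + v (Suc m)"
      using Suc.prems(3) by simp
    \<comment> \<open>move the excess exponent of \<open>\<alpha> (m + 1)\<close> to the larger base \<open>\<alpha> m\<close>\<close>
    define \<delta> where "\<delta> = u (Suc m) - v (Suc m)"
    define u' where "u' = u(m := u m + \<delta>)"
    have "v (Suc m) \<le> u (Suc m)" using prefix total by linarith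
    then have u_last: "u (Suc m) = \<delta> + v (Suc m)" by (simp add: \<delta>_def)
    have u'_prefix: "(\<Sum>j=1..J. u' j) = (\<Sum>j=1..J. u j) + (if m \<le> J then \<delta> else 0)" if "J \<le> m" for J
      using that \<open>m = Suc m'\<close>
      by (cases "J = m") (auto simp: u'_def atLeastAtMostSuc_conv intro!: sum.cong)
    have IH: "(\<Prod>j=1..m. \<alpha> j ^ u' j) \<le> (\<Prod>j=1..m. \<alpha> j ^ v j)"
    proof (rule Suc.IH)
      show "(\<Sum>j=1..J. u' j) \<le> (\<Sum>j=1..J. v j)" if "J \<le> m" for J
        using Suc.prems(2)[of J] that u'_prefix[OF that] total u_last by (cases "J = m") auto
      show "(\<Sum>j=1..m. u' j) = (\<Sum>j=1..m. v j)" using u'_prefix[of m] total u_last by simp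
    qed (use Suc.prems(1) in auto)
    have u'_prod: "(\<Prod>j=1..m. \<alpha> j ^ u' j) = (\<Prod>j=1..m. \<alpha> j ^ u j) * \<alpha> m ^ \<delta>"
      using \<open>m = Suc m'\<close>
      by (auto simp: u'_def atLeastAtMostSuc_conv power_add mult_ac intro!: prod.cong)
    have "\<alpha> (Suc m) \<le> \<alpha> m" using Suc.prems(1) \<open>m = Suc m'\<close> by simp
    have "(\<Prod>j=1..Suc m. \<alpha> j ^ u j)
        = \<alpha> (Suc m) ^ \<delta> * ((\<Prod>j=1..m. \<alpha> j ^ u j) * \<alpha> (Suc m) ^ v (Suc m))"
      by (simp add: u_last power_add mult_ac)
    also have "\<dots> \<le> \<alpha> m ^ \<delta> * ((\<Prod>j=1..m. \<alpha> j ^ u j) * \<alpha> (Suc m) ^ v (Suc m))"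
      by (intro trop_mult_right_mono trop_power_mono) fact
    also have "\<dots> = (\<Prod>j=1..m. \<alpha> j ^ u' j) * \<alpha> (Suc m) ^ v (Suc m)"
      unfolding u'_prod by (simp add: mult_ac)
    also have "\<dots> \<le> (\<Prod>j=1..Suc m. \<alpha> j ^ v j)"
      using IH by (simp add: trop_mult_right_mono)
    finally show ?thesis .
  qed
qed simp

lemma banded_coeff_part_le:
  fixes f :: "'g::linordered_ab_group_add trop poly"
  assumes "degree f = m" and roots: "tropical_roots m (coeff f) \<alpha>" and band: "sylvester_banded n m \<sigma>"
  shows "(\<Prod>r<n. coeff f (\<sigma> r - r))
    \<le> lead_coeff f ^ n * (\<Prod>j=1..m. \<alpha> j ^ card {r\<in>{..<n}. j \<le> m + r - \<sigma> r})"
proof -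
  have "coeff f (\<sigma> r - r) \<le> lead_coeff f * (\<Prod>i=1..m + r - \<sigma> r. \<alpha> i)" if "r < n" for r
  proof -
    have "\<sigma> r - r \<le> m" "m - (\<sigma> r - r) = m + r - \<sigma> r"
      using band that unfolding sylvester_banded_def by auto
    then show ?thesis using roots \<open>degree f = m\<close> unfolding tropical_roots_def by metis
  qed
  then have "(\<Prod>r<n. coeff f (\<sigma> r - r)) \<le> (\<Prod>r<n. lead_coeff f * (\<Prod>i=1..m + r - \<sigma> r. \<alpha> i))"
    by (intro trop_prod_mono) simp
  also have "\<dots> = lead_coeff f ^ n * (\<Prod>j=1..m. \<alpha> j ^ card {r\<in>{..<n}. j \<le> m + r - \<sigma> r})"
  proof -
    have "\<And>r. r \<in> {..<n} \<Longrightarrow> m + r - \<sigma> r \<le> m" using band by (auto simp: sylvester_banded_def)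
    then have "(\<Prod>r<n. \<Prod>i=1..m + r - \<sigma> r. \<alpha> i)
        = (\<Prod>j=1..m. \<alpha> j ^ card {r\<in>{..<n}. j \<le> m + r - \<sigma> r})"
      by (rule prod_prod_initial_segments[OF finite_lessThan])
    then show ?thesis by (simp add: prod.distrib)
  qed
  finally show ?thesis .
qed

text \<open>Ranking the \<open>g\<close>-rows by decreasing column, the \<open>J\<close> highest of them carry at least as much
  exponent as the first \<open>J\<close> roots receive from the \<open>f\<close>-rows.\<close>

lemma banded_exponents_majorized:
  assumes \<sigma>: "\<sigma> permutes {..<n + m}" and band: "sylvester_banded n m \<sigma>"
  defines "rk s \<equiv> card {s'\<in>{..<m}. \<sigma> (n + s) \<le> \<sigma> (n + s')}"
  defines "v j \<equiv> \<Sum>s<m. if rk s = j then \<sigma> (n + s) - s else 0"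
  shows "bij_betw rk {..<m} {1..m}"
    and "J \<le> m \<Longrightarrow> (\<Sum>j=1..J. card {r\<in>{..<n}. j \<le> m + r - \<sigma> r}) \<le> (\<Sum>j=1..J. v j)"
    and "(\<Sum>j=1..m. card {r\<in>{..<n}. j \<le> m + r - \<sigma> r}) = (\<Sum>j=1..m. v j)"
proof -
  have inj: "inj_on (\<lambda>s. \<sigma> (n + s)) {..<m}"
    by (rule inj_onI) (metis permutes_inj[OF \<sigma>] injD add_left_cancel)
  then show rk: "bij_betw rk {..<m} {1..m}"
    unfolding rk_def using bij_betw_rank[of "{..<m}" "\<lambda>s. \<sigma> (n + s)"] by simp
  have v_prefix: "(\<Sum>j=1..J. v j) = (\<Sum>s\<in>{s. s < m \<and> rk s \<le> J}. \<sigma> (n + s) - s)" for J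
    unfolding v_def using sum_by_rank[OF rk] by (simp add: Collect_conj_eq Int_commute lessThan_def)
  show "(\<Sum>j=1..J. card {r\<in>{..<n}. j \<le> m + r - \<sigma> r}) \<le> (\<Sum>j=1..J. v j)" if "J \<le> m" for J
  proof (cases "J = 0")
    case False
    define T where "T = {s. s < m \<and> rk s \<le> J}"
    have "card T = J"
      using card_rank_le[of "{..<m}" "\<lambda>s. \<sigma> (n + s)" J] inj \<open>J \<le> m\<close> by (simp add: T_def rk_def)
    moreover have "s' \<in> T" if "s \<in> T" "s' < m" "\<sigma> (n + s) \<le> \<sigma> (n + s')" for s s'
    proof -
      have "rk s' \<le> rk s"
        unfolding rk_def using that(3) by (intro card_mono) auto
      then show ?thesis using that(1,2) by (simp add: T_def)
    qed
    moreover have "T \<noteq> {}" using \<open>card T = J\<close> False by auto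
    moreover have "T \<subseteq> {..<m}" by (auto simp: T_def)
    ultimately have "(\<Sum>r<n. min J (m + r - \<sigma> r)) \<le> (\<Sum>s\<in>T. \<sigma> (n + s) - s)"
      using banded_prefix_le[OF \<sigma> band, of T] by blast
    then show ?thesis unfolding v_prefix sum_card_initial_segments[OF finite_lessThan] T_def .
  qed simp
  have "{s. s < m \<and> rk s \<le> m} = {..<m}" using rk by (auto simp: bij_betw_def)
  then have v_total: "(\<Sum>s<m. \<sigma> (n + s) - s) = (\<Sum>j=1..m. v j)" unfolding v_prefix by simp
  have "(\<Sum>j=1..m. card {r\<in>{..<n}. j \<le> m + r - \<sigma> r}) = (\<Sum>r<n. min m (m + r - \<sigma> r))"
    by (rule sum_card_initial_segments) simp
  also have "\<dots> = (\<Sum>r<n. m + r - \<sigma> r)"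
    using band by (intro sum.cong) (auto simp: sylvester_banded_def)
  also have "\<dots> = (\<Sum>s<m. \<sigma> (n + s) - s)" by (rule banded_shift_sum_eq[OF \<sigma> band])
  also note v_total
  finally show "(\<Sum>j=1..m. card {r\<in>{..<n}. j \<le> m + r - \<sigma> r}) = (\<Sum>j=1..m. v j)" .
qed

lemma sylvester_term_le:
  fixes f g :: "'g::linordered_ab_group_add trop poly"
  assumes m: "degree f = m" and n: "degree g = n" and roots: "tropical_roots m (coeff f) \<alpha>"
    and \<sigma>: "\<sigma> permutes {..<n + m}"
  shows "(\<Prod>i<n + m. sylvester f g i (\<sigma> i)) \<le> lead_coeff f ^ n * (\<Prod>j=1..m. poly g (\<alpha> j))"
proof (cases "(\<Prod>i<n + m. sylvester f g i (\<sigma> i)) = 0")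
  case False
  then have band: "sylvester_banded n m \<sigma>" using sylvester_term_nonzero_imp_banded m n by blast
  define rk where "rk = (\<lambda>s. card {s'\<in>{..<m}. \<sigma> (n + s) \<le> \<sigma> (n + s')})"
  define v where "v = (\<lambda>j. \<Sum>s<m. if rk s = j then \<sigma> (n + s) - s else 0)"
  note majorized = banded_exponents_majorized[OF \<sigma> band, folded rk_def]
  have \<alpha>_antitone: "\<And>i. 1 \<le> i \<Longrightarrow> i < m \<Longrightarrow> \<alpha> (Suc i) \<le> \<alpha> i"
    using roots unfolding tropical_roots_def by blast
  have v_prod: "(\<Prod>j=1..m. \<alpha> j ^ v j) = (\<Prod>s<m. \<alpha> (rk s) ^ (\<sigma> (n + s) - s))"
  proof -
    have "(\<Prod>j=1..m. \<alpha> j ^ v j)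
        = (\<Prod>j=1..m. \<Prod>s<m. if rk s = j then \<alpha> j ^ (\<sigma> (n + s) - s) else 1)"
      unfolding v_def power_sum by (intro prod.cong refl) auto
    also have "\<dots> = (\<Prod>s<m. \<Prod>j=1..m. if rk s = j then \<alpha> j ^ (\<sigma> (n + s) - s) else 1)"
      by (rule prod.swap)
    also have "\<dots> = (\<Prod>s<m. \<alpha> (rk s) ^ (\<sigma> (n + s) - s))"
      using majorized(1) by (intro prod.cong refl) (auto simp: bij_betw_def prod.delta')
    finally show ?thesis .
  qed
  have "(\<Prod>i<n + m. sylvester f g i (\<sigma> i))
      = (\<Prod>r<n. coeff f (\<sigma> r - r)) * (\<Prod>s<m. coeff g (\<sigma> (n + s) - s))"
    by (rule sylvester_term_banded_eq[OF n band])
  also have "\<dots> \<le> lead_coeff f ^ n * (\<Prod>j=1..m. \<alpha> j ^ card {r\<in>{..<n}. j \<le> m + r - \<sigma> r})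
      * (\<Prod>s<m. coeff g (\<sigma> (n + s) - s))"
    by (intro trop_mult_right_mono banded_coeff_part_le[OF m roots band])
  also have "\<dots> \<le> lead_coeff f ^ n * (\<Prod>j=1..m. \<alpha> j ^ v j) * (\<Prod>s<m. coeff g (\<sigma> (n + s) - s))"
    using \<alpha>_antitone majorized(2,3)
    by (intro trop_mult_right_mono trop_mult_left_mono trop_prod_power_le_of_majorized)
       (auto simp: v_def rk_def)
  also have "\<dots> = lead_coeff f ^ n * (\<Prod>s<m. coeff g (\<sigma> (n + s) - s) * \<alpha> (rk s) ^ (\<sigma> (n + s) - s))"
    unfolding v_prod by (simp add: prod.distrib mult_ac)
  also have "\<dots> \<le> lead_coeff f ^ n * (\<Prod>s<m. poly g (\<alpha> (rk s)))"
    by (intro trop_mult_left_mono trop_prod_mono trop_coeff_le_poly)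
  also have "(\<Prod>s<m. poly g (\<alpha> (rk s))) = (\<Prod>j=1..m. poly g (\<alpha> j))"
    by (rule prod.reindex_bij_betw[OF majorized(1)])
  finally show ?thesis .
qed simp

section \<open>A term of the Sylvester permanent attaining the bound\<close>

definition dominant_exp :: "'g::linordered_ab_group_add trop poly \<Rightarrow> 'g trop \<Rightarrow> nat" where
  "dominant_exp p x = (GREATEST j. j \<le> degree p \<and> coeff p j * x ^ j = poly p x)"

lemma dominant_exp:
  fixes p :: "'g::linordered_ab_group_add trop poly"
  shows dominant_exp_le_degree: "dominant_exp p x \<le> degree p"
    and coeff_dominant_exp: "coeff p (dominant_exp p x) * x ^ dominant_exp p x = poly p x"
    and dominant_exp_greatest: "coeff p j * x ^ j = poly p x \<Longrightarrow> j \<le> degree p \<Longrightarrow> j \<le> dominant_exp p x"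
proof -
  have "\<exists>j\<in>{..degree p}. poly p x = coeff p j * x ^ j"
    unfolding poly_altdef by (rule trop_sum_attained) auto
  then obtain j0 where "j0 \<le> degree p \<and> coeff p j0 * x ^ j0 = poly p x" by auto
  then have "dominant_exp p x \<le> degree p \<and> coeff p (dominant_exp p x) * x ^ dominant_exp p x = poly p x"
    unfolding dominant_exp_def
    by (rule GreatestI_nat[where P = "\<lambda>j. j \<le> degree p \<and> coeff p j * x ^ j = poly p x"]) auto
  then show "dominant_exp p x \<le> degree p" "coeff p (dominant_exp p x) * x ^ dominant_exp p x = poly p x"
    by auto
  show "coeff p j * x ^ j = poly p x \<Longrightarrow> j \<le> degree p \<Longrightarrow> j \<le> dominant_exp p x"
    unfolding dominant_exp_def by (rule Greatest_le_nat[where b = "degree p"]) auto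
qed

lemma dominant_exp_zero:
  "poly p 0 \<noteq> 0 \<Longrightarrow> dominant_exp (p::'g::linordered_ab_group_add trop poly) 0 = 0"
  using coeff_dominant_exp[of p 0] by (cases "dominant_exp p 0") auto

lemma dominant_exp_mono:
  fixes p :: "'g::linordered_ab_group_add trop poly"
  assumes "x \<le> y" and "poly p x \<noteq> 0" and "poly p y \<noteq> 0"
  shows "dominant_exp p x \<le> dominant_exp p y"
proof (rule ccontr)
  define j j' where "j = dominant_exp p x" and "j' = dominant_exp p y"
  assume "\<not> dominant_exp p x \<le> dominant_exp p y"
  then obtain \<delta> where \<delta>: "j = j' + \<delta>" "\<delta> > 0" unfolding j_def j'_def by (metis less_imp_add_positive not_le)
  have x: "coeff p j * x ^ j = poly p x" and y: "coeff p j' * y ^ j' = poly p y"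
    unfolding j_def j'_def by (rule coeff_dominant_exp)+
  define C where "C = coeff p j * coeff p j' * x ^ j' * y ^ j'"
  have "coeff p j * x ^ j \<noteq> 0" "coeff p j' * y ^ j' \<noteq> 0" using x y assms(2,3) by simp_all
  then have "x \<noteq> 0" "C \<noteq> 0" using \<delta> by (auto simp: C_def power_add)
  \<comment> \<open>exchanging the two dominant monomials gives \<open>y ^ \<delta> \<le> x ^ \<delta>\<close>\<close>
  have "(coeff p j' * x ^ j') * (coeff p j * y ^ j) \<le> (coeff p j * x ^ j) * (coeff p j' * y ^ j')"
    by (rule trop_mult_mono) (simp_all only: x y trop_coeff_le_poly)
  then have "y ^ \<delta> * C \<le> x ^ \<delta> * C" by (simp add: C_def \<delta>(1) power_add mult_ac)
  then have "y \<le> x" using trop_mult_le_cancel_right[OF \<open>C \<noteq> 0\<close>] trop_power_le_imp_le \<delta>(2) by blast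
  then have "x = y" using assms(1) by simp
  then have "j \<le> j'" unfolding j'_def using x dominant_exp_le_degree[of p x]
    by (intro dominant_exp_greatest) (simp_all add: j_def)
  then show False using \<delta> by simp
qed

lemma dominant_exp_at_roots_mono:
  fixes \<alpha> :: "nat \<Rightarrow> 'g::linordered_ab_group_add trop"
  assumes step: "\<And>i. 1 \<le> i \<Longrightarrow> i < m \<Longrightarrow> \<alpha> (Suc i) \<le> \<alpha> i"
    and nz: "\<And>j. j \<in> {1..m} \<Longrightarrow> poly p (\<alpha> j) \<noteq> 0"
    and "s \<le> s'" "s' < m"
  shows "dominant_exp p (\<alpha> (m - s)) \<le> dominant_exp p (\<alpha> (m - s'))"
  using assms(3,4) nz antitone_of_step[of m \<alpha> "m - s'" "m - s", OF step]
  by (intro dominant_exp_mono) auto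

text \<open>Row \<open>r\<close> of \<open>f\<close> in the shuffle built from the dominant exponents at the roots lands on a
  breakpoint of the roots: the dominant exponent, and hence the root, changes right there.\<close>

lemma shuffle_row_at_breakpoint:
  fixes \<alpha> :: "nat \<Rightarrow> 'g::linordered_ab_group_add trop" and r :: nat
  assumes step: "\<And>i. 1 \<le> i \<Longrightarrow> i < m \<Longrightarrow> \<alpha> (Suc i) \<le> \<alpha> i" and last: "\<alpha> (Suc m) = 0"
    and nz: "\<And>j. j \<in> {1..m} \<Longrightarrow> poly p (\<alpha> j) \<noteq> 0"
  defines "k s \<equiv> dominant_exp p (\<alpha> (m - s))"
  defines "a \<equiv> card {s\<in>{..<m}. k s \<le> r}"
  shows "a = m \<or> \<alpha> (m - a) \<noteq> \<alpha> (Suc (m - a))"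
proof -
  have a_iff: "s < a \<longleftrightarrow> k s \<le> r" if "s < m" for s
    unfolding a_def k_def using dominant_exp_at_roots_mono[of m \<alpha> p, OF step nz] that
    by (rule less_card_sublevel_iff)
  have "a \<le> m"
    unfolding a_def using card_mono[OF finite_lessThan, of "{s\<in>{..<m}. k s \<le> r}" m] by auto
  moreover have "\<alpha> (m - a) \<noteq> \<alpha> (Suc (m - a))" if "a < m"
  proof (cases "a = 0")
    case True
    have "r < k 0" using a_iff[of 0] that True by simp
    then have "\<alpha> m \<noteq> 0" using nz[of m] that dominant_exp_zero[of p] by (auto simp: k_def)
    then show ?thesis using True last by simp
  next
    case False
    then have "k (a - 1) \<le> r" "r < k a" using a_iff[of "a - 1"] a_iff[of a] that by auto
    then have "k (a - 1) \<noteq> k a" by simp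
    then show ?thesis using False that by (auto simp: k_def Suc_diff_le)
  qed
  ultimately show ?thesis by linarith
qed

lemma sylvester_term_ge:
  fixes f g :: "'g::linordered_ab_group_add trop poly"
  assumes m: "degree f = m" and n: "degree g = n" and roots: "tropical_roots m (coeff f) \<alpha>"
  obtains \<sigma> where "\<sigma> permutes {..<n + m}"
    and "lead_coeff f ^ n * (\<Prod>j=1..m. poly g (\<alpha> j)) \<le> (\<Prod>i<n + m. sylvester f g i (\<sigma> i))"
proof (cases "(\<Prod>j=1..m. poly g (\<alpha> j)) = 0")
  case True
  then show ?thesis using that[OF permutes_id] by simp
next
  case False
  then have poly_nz: "poly g (\<alpha> j) \<noteq> 0" if "j \<in> {1..m}" for j
    using that by (metis finite_atLeastAtMost prod_zero)
  have step: "\<And>i. 1 \<le> i \<Longrightarrow> i < m \<Longrightarrow> \<alpha> (Suc i) \<le> \<alpha> i"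
    and last: "\<alpha> (Suc m) = 0"
    and breakpoint: "\<And>a. a \<le> m \<Longrightarrow> a = m \<or> \<alpha> (m - a) \<noteq> \<alpha> (Suc (m - a))
        \<Longrightarrow> coeff f a = coeff f m * (\<Prod>i=1..m - a. \<alpha> i)"
    using roots unfolding tropical_roots_def by blast+
  define K where "K j = dominant_exp g (\<alpha> j)" for j
  define k where "k s = K (m - s)" for s
  define a where "a r = card {s\<in>{..<m}. k s \<le> r}" for r
  have k_mono: "k s \<le> k s'" if "s \<le> s'" "s' < m" for s s'
    unfolding k_def K_def using step poly_nz that by (rule dominant_exp_at_roots_mono)
  have k_le: "k s \<le> n" for s unfolding k_def K_def using dominant_exp_le_degree[of g] n by simp
  have a_le: "a r \<le> m" for r
    unfolding a_def using card_mono[OF finite_lessThan, of "{s\<in>{..<m}. k s \<le> r}" m] by auto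
  define \<sigma> where "\<sigma> i = (if i < n then i + a i else if i < n + m then (i - n) + k (i - n) else i)" for i
  have \<sigma>: "\<sigma> permutes {..<n + m}"
    unfolding \<sigma>_def[abs_def] a_def using k_mono k_le by (rule shuffle_permutes)
  have band: "sylvester_banded n m \<sigma>"
    using a_le k_le by (simp add: sylvester_banded_def \<sigma>_def)
  have f_row: "coeff f (a r) = coeff f m * (\<Prod>i=1..m - a r. \<alpha> i)" for r
    using breakpoint[OF a_le] shuffle_row_at_breakpoint[OF step last poly_nz]
    unfolding a_def k_def K_def by blast
  have f_exponents: "card {r\<in>{..<n}. j \<le> m - a r} = K j" if "j \<in> {1..m}" for j
  proof -
    have "{r\<in>{..<n}. j \<le> m - a r} = {r\<in>{..<n}. a r \<le> m - j}" using a_le that by auto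
    moreover have "K j \<le> n" using k_le[of "m - j"] that by (simp add: k_def)
    ultimately show ?thesis
      using card_sublevel_dual[of m k "m - j" n, OF k_mono] that by (simp add: a_def k_def)
  qed
  have "poly g (\<alpha> j) = coeff g (K j) * \<alpha> j ^ K j" for j
    unfolding K_def by (rule coeff_dominant_exp[symmetric])
  then have "lead_coeff f ^ n * (\<Prod>j=1..m. poly g (\<alpha> j))
      = lead_coeff f ^ n * (\<Prod>j=1..m. \<alpha> j ^ K j) * (\<Prod>j=1..m. coeff g (K j))"
    by (simp add: prod.distrib mult_ac)
  also have "(\<Prod>j=1..m. \<alpha> j ^ K j) = (\<Prod>j=1..m. \<alpha> j ^ card {r\<in>{..<n}. j \<le> m - a r})"
    using f_exponents by (intro prod.cong refl) simp
  also have "\<dots> = (\<Prod>r<n. \<Prod>i=1..m - a r. \<alpha> i)"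
    by (rule prod_prod_initial_segments[OF finite_lessThan, symmetric]) simp
  also have "(\<Prod>j=1..m. coeff g (K j)) = (\<Prod>s<m. coeff g (k s))"
    unfolding k_def by (rule prod_lessThan_reflect[symmetric])
  also have "lead_coeff f ^ n * (\<Prod>r<n. \<Prod>i=1..m - a r. \<alpha> i) * (\<Prod>s<m. coeff g (k s))
      = (\<Prod>r<n. coeff f (\<sigma> r - r)) * (\<Prod>s<m. coeff g (\<sigma> (n + s) - s))"
    by (simp add: \<sigma>_def f_row prod.distrib m)
  also have "\<dots> = (\<Prod>i<n + m. sylvester f g i (\<sigma> i))"
    by (rule sylvester_term_banded_eq[OF n band, symmetric])
  finally show ?thesis using that[OF \<sigma>] by simp
qed

section \<open>Multiplicativity of the resultant\<close>

lemma layered_resultant_trop_poisson: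
  fixes f g :: "'g::linordered_ab_group_add trop poly"
  assumes roots: "tropical_roots (degree f) (coeff f) \<alpha>"
  shows "layered_resultant f g = lead_coeff f ^ degree g * (\<Prod>j=1..degree f. poly g (\<alpha> j))"
proof -
  define m n where "m = degree f" and "n = degree g"
  consider "m = 0" | "n = 0" | "m \<noteq> 0" "n \<noteq> 0" by blast
  then show ?thesis
  proof cases
    case 1
    then show ?thesis by (simp add: layered_resultant_def m_def)
  next
    case 2
    then have "poly g x = coeff g 0" for x by (simp add: poly_altdef n_def)
    then show ?thesis using 2 by (simp add: layered_resultant_def m_def n_def)
  next
    case 3
    let ?P = "lead_coeff f ^ n * (\<Prod>j=1..m. poly g (\<alpha> j))"
    have "permanent (n + m) (sylvester f g) \<le> ?P"
      unfolding permanent_def using sylvester_term_le[OF m_def[symmetric] n_def[symmetric]] roots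
      by (intro trop_sum_le) (simp add: m_def)
    moreover obtain \<sigma> where \<sigma>: "\<sigma> permutes {..<n + m}"
      and "?P \<le> (\<Prod>i<n + m. sylvester f g i (\<sigma> i))"
      using sylvester_term_ge[OF m_def[symmetric] n_def[symmetric]] roots m_def by blast
    moreover have "(\<Prod>i<n + m. sylvester f g i (\<sigma> i)) \<le> permanent (n + m) (sylvester f g)"
      unfolding permanent_def using \<sigma> finite_permutations[of "{..<n + m}"]
      by (intro trop_member_le_sum) auto
    ultimately have "layered_resultant f g = ?P"
      using 3 by (simp add: layered_resultant_def m_def n_def add.commute)
    then show ?thesis by (simp add: m_def n_def)
  qed
qed

text \<open>Over the tropical semifield of \<open>'g\<close> a polynomial need not factor, but its image under
  \<open>a \<mapsto> a ^ (deg f)!\<close> does, since then every coefficient ratio has the required roots.\<close>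

lemma layered_resultant_trop_mult_right:
  fixes f g h :: "'g::linordered_ab_group_add trop poly"
  assumes "f \<noteq> 0" and "g \<noteq> 0" and "h \<noteq> 0"
  shows "layered_resultant f (g * h) = layered_resultant f g * layered_resultant f h"
proof -
  define d :: nat where "d = fact (degree f)"
  define \<psi> where "\<psi> = (\<lambda>a::'g trop. a ^ d)"
  have "d > 0" by (simp add: d_def)
  interpret \<psi>: zero_reflecting_hom \<psi> unfolding \<psi>_def by (rule zero_reflecting_hom_trop_power[OF \<open>d > 0\<close>])
  define F G H where "F = map_poly \<psi> f" and "G = map_poly \<psi> g" and "H = map_poly \<psi> h"
  have "G \<noteq> 0" "H \<noteq> 0" using assms by (simp_all add: G_def H_def \<psi>.map_poly_hom_eq_0_iff)
  have "coeff F (degree F) \<noteq> 0" using assms(1) by (simp add: F_def \<psi>.map_poly_hom_eq_0_iff)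
  moreover have "k dvd d" if "1 \<le> k" "k \<le> degree F" for k
    using that by (simp add: d_def F_def \<psi>.degree_map_poly_hom dvd_fact)
  moreover have "\<exists>y. coeff F a = y ^ d" for a
    unfolding F_def \<psi>.coeff_map_poly_hom by (auto simp: \<psi>_def)
  ultimately obtain \<alpha> where roots: "tropical_roots (degree F) (coeff F) \<alpha>"
    using tropical_roots_exist by blast
  have "\<psi> (layered_resultant f (g * h)) = layered_resultant F (G * H)"
    by (simp add: F_def G_def H_def \<psi>.layered_resultant_hom[symmetric] \<psi>.map_poly_hom_mult)
  also have "\<dots> = layered_resultant F G * layered_resultant F H"
    using \<open>G \<noteq> 0\<close> \<open>H \<noteq> 0\<close>
    by (simp add: layered_resultant_trop_poisson[OF roots] degree_mult_eq power_add prod.distrib mult_ac)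
  also have "\<dots> = \<psi> (layered_resultant f g * layered_resultant f h)"
    by (simp add: F_def G_def H_def \<psi>.layered_resultant_hom \<psi>.hom_mult)
  finally show ?thesis using trop_power_inj[OF \<open>d > 0\<close>] by (simp add: \<psi>_def)
qed

lemma layered_resultant_trop_mult_left:
  fixes f g h :: "'g::linordered_ab_group_add trop poly"
  assumes "f \<noteq> 0" and "g \<noteq> 0" and "h \<noteq> 0"
  shows "layered_resultant (f * g) h = layered_resultant f h * layered_resultant g h"
  using layered_resultant_trop_mult_right[OF assms(3,1,2)] by (simp add: layered_resultant_commute[of _ h])

theorem theorem8p25:
  fixes f g h :: "('g::linordered_ab_group_add, 'l::lin_ord_comm_semiring_1) layered poly"
  assumes "f \<noteq> 0" and "g \<noteq> 0" and "h \<noteq> 0"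
  shows "layered_resultant f (g * h) \<cong>\<^sub>\<nu> layered_resultant f g * layered_resultant f h
         \<and> layered_resultant (f * g) h \<cong>\<^sub>\<nu> layered_resultant f h * layered_resultant g h"
proof -
  interpret \<tau>: zero_reflecting_hom "tropicalize :: ('g, 'l) layered \<Rightarrow> 'g trop"
    by (rule zero_reflecting_hom_tropicalize)
  note transfer = \<tau>.map_poly_hom_mult \<tau>.hom_mult \<tau>.layered_resultant_hom[symmetric]
  have nz: "map_poly tropicalize f \<noteq> 0" "map_poly tropicalize g \<noteq> 0" "map_poly tropicalize h \<noteq> 0"
    using assms by (simp_all add: \<tau>.map_poly_hom_eq_0_iff)
  show ?thesis
    unfolding nu_equiv_iff_tropicalize_eq
    using layered_resultant_trop_mult_right[OF nz] layered_resultant_trop_mult_left[OF nz]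
    by (simp add: transfer)
qed

end
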